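(* Let $k$ be a positive integer and let $G$ be an $n$-vertex connected graph with $\operatorname{diam}(G)\ge k+1$ and minimum degree $\delta$. Let $S$ be a $k$-independent set in $G$, and let $i$ be an integer with $3\le i\le \frac{k}{2}-1$. Then $$|N^{i-1}(S)|+|N^i(S)|+|N^{i+1}(S)|\ge 3|S|,$$ and, if $\delta\ge 2$, $$|N^{i-1}(S)|+|N^i(S)|+|N^{i+1}(S)|\ge (\delta+1)|S|.$$
   Context: All graphs are finite, simple and undirected. For vertices $u,v$, $d(u,v)$ is the length of a shortest $u$–$v$ path, and $\operatorname{diam}(G)$ is the maximum distance between two vertices. For a nonnegative integer $k$, a $k$-independent set in $G$ is a set $S\subseteq V(G)$ such that any two distinct vertices of $S$ are at distance greater than $k$. For $S\subseteq V(G)$, $N(S)$ denotes the set of vertices adjacent to some vertex of $S$. Set $N^0(S)=S$, $N^1(S)=N(S)$, and for $j\ge 2$, $N^j(S)=N(N^{j-1}(S))\setminus\bigl(N^{j-2}(S)\cup N^{j-1}(S)\bigr)$. *)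

theory Defs
  imports Main
begin

definition simple_graph :: "'a set \<Rightarrow> ('a \<Rightarrow> 'a \<Rightarrow> bool) \<Rightarrow> bool" where
  "simple_graph V E \<longleftrightarrow> finite V \<and> (\<forall>u v. E u v \<longrightarrow> u \<in> V \<and> v \<in> V)
     \<and> (\<forall>u v. E u v \<longrightarrow> E v u) \<and> (\<forall>u. \<not> E u u)"

definition walk_of_len :: "('a \<Rightarrow> 'a \<Rightarrow> bool) \<Rightarrow> 'a \<Rightarrow> 'a \<Rightarrow> nat \<Rightarrow> bool" where
  "walk_of_len E u v n \<longleftrightarrow> (\<exists>xs. length xs = Suc n \<and> xs ! 0 = u \<and> xs ! n = v
     \<and> (\<forall>j<n. E (xs ! j) (xs ! Suc j)))"

definition connected_graph :: "'a set \<Rightarrow> ('a \<Rightarrow> 'a \<Rightarrow> bool) \<Rightarrow> bool" where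
  "connected_graph V E \<longleftrightarrow> (\<forall>u\<in>V. \<forall>v\<in>V. \<exists>n. walk_of_len E u v n)"

definition gdist :: "('a \<Rightarrow> 'a \<Rightarrow> bool) \<Rightarrow> 'a \<Rightarrow> 'a \<Rightarrow> nat" where
  "gdist E u v = (LEAST n. walk_of_len E u v n)"

definition diam :: "'a set \<Rightarrow> ('a \<Rightarrow> 'a \<Rightarrow> bool) \<Rightarrow> nat" where
  "diam V E = Max {gdist E u v | u v. u \<in> V \<and> v \<in> V}"

definition min_degree :: "'a set \<Rightarrow> ('a \<Rightarrow> 'a \<Rightarrow> bool) \<Rightarrow> nat" where
  "min_degree V E = Min {card {v \<in> V. E u v} | u. u \<in> V}"

definition k_independent :: "'a set \<Rightarrow> ('a \<Rightarrow> 'a \<Rightarrow> bool) \<Rightarrow> nat \<Rightarrow> 'a set \<Rightarrow> bool" where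
  "k_independent V E k S \<longleftrightarrow> S \<subseteq> V \<and> (\<forall>u\<in>S. \<forall>v\<in>S. u \<noteq> v \<longrightarrow> gdist E u v > k)"

definition nbhd :: "'a set \<Rightarrow> ('a \<Rightarrow> 'a \<Rightarrow> bool) \<Rightarrow> 'a set \<Rightarrow> 'a set" where
  "nbhd V E S = {v \<in> V. \<exists>u\<in>S. E u v}"

fun nbhd_pow :: "'a set \<Rightarrow> ('a \<Rightarrow> 'a \<Rightarrow> bool) \<Rightarrow> nat \<Rightarrow> 'a set \<Rightarrow> 'a set" where
  "nbhd_pow V E 0 S = S"
| "nbhd_pow V E (Suc 0) S = nbhd V E S"
| "nbhd_pow V E (Suc (Suc j)) S =
     nbhd V E (nbhd_pow V E (Suc j) S) - (nbhd_pow V E j S \<union> nbhd_pow V E (Suc j) S)"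

end

theory Submission
  imports Defs
begin

text \<open>
  If \<open>S\<close> spans no edge, \<open>N^j(S)\<close> is exactly the set of vertices at distance \<open>j\<close> from \<open>S\<close>.
  If moreover \<open>2(i + 1) \<le> k\<close>, a vertex within distance \<open>i + 1\<close> of \<open>s \<in> S\<close> has \<open>s\<close> as its
  unique nearest point of \<open>S\<close>, so the annuli \<open>{v. i - 1 \<le> d(s, v) \<le> i + 1}\<close>, \<open>s \<in> S\<close>, are
  pairwise disjoint subsets of \<open>N^(i-1)(S) \<union> N^i(S) \<union> N^(i+1)(S)\<close>. As \<open>diam(G) > 2i\<close>, some vertex
  lies at distance more than \<open>i\<close> from \<open>s\<close>, so the annulus of \<open>s\<close> meets each of the distances
  \<open>i - 1, i, i + 1\<close> and contains a vertex at distance \<open>i\<close> together with all its neighbours: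
  it has at least \<open>3\<close> and at least \<open>\<delta> + 1\<close> vertices.
\<close>

lemma walk_of_len_0_iff: "walk_of_len E u v 0 \<longleftrightarrow> u = v"
proof
  assume "walk_of_len E u v 0"
  then show "u = v" unfolding walk_of_len_def by auto
next
  assume "u = v"
  then show "walk_of_len E u v 0" unfolding walk_of_len_def
    by (intro exI[of _ "[u]"]) auto
qed

lemma walk_of_len_Suc_iff:
  "walk_of_len E u w (Suc n) \<longleftrightarrow> (\<exists>v. walk_of_len E u v n \<and> E v w)"
proof
  assume "walk_of_len E u w (Suc n)"
  then obtain xs where xs: "length xs = Suc (Suc n)" "xs ! 0 = u" "xs ! Suc n = w"
    "\<forall>j<Suc n. E (xs ! j) (xs ! Suc j)" unfolding walk_of_len_def by blast
  have "walk_of_len E u (xs ! n) n" unfolding walk_of_len_def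
    by (rule exI[of _ "take (Suc n) xs"]) (use xs in auto)
  moreover have "E (xs ! n) w" using xs by auto
  ultimately show "\<exists>v. walk_of_len E u v n \<and> E v w" by blast
next
  assume "\<exists>v. walk_of_len E u v n \<and> E v w"
  then obtain v xs where xs: "length xs = Suc n" "xs ! 0 = u" "xs ! n = v"
    "\<forall>j<n. E (xs ! j) (xs ! Suc j)" "E v w" unfolding walk_of_len_def by blast
  show "walk_of_len E u w (Suc n)" unfolding walk_of_len_def
  proof (rule exI[of _ "xs @ [w]"], intro conjI allI impI)
    show "length (xs @ [w]) = Suc (Suc n)" "(xs @ [w]) ! 0 = u" "(xs @ [w]) ! Suc n = w"
      using xs by (simp_all add: nth_append)
    fix j assume "j < Suc n"
    then consider "j < n" | "j = n" by linarith
    then show "E ((xs @ [w]) ! j) ((xs @ [w]) ! Suc j)"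
      by cases (use xs in \<open>auto simp: nth_append\<close>)
  qed
qed

lemma walk_of_len_1_iff: "walk_of_len E u v 1 \<longleftrightarrow> E u v"
  using walk_of_len_Suc_iff[of E u v 0] by (simp add: walk_of_len_0_iff)

lemma walk_of_len_append:
  "walk_of_len E u v n \<Longrightarrow> walk_of_len E v w m \<Longrightarrow> walk_of_len E u w (n + m)"
proof (induction m arbitrary: w)
  case 0
  then show ?case by (simp add: walk_of_len_0_iff)
next
  case (Suc m)
  then obtain x where "walk_of_len E v x m" "E x w" by (auto simp: walk_of_len_Suc_iff)
  with Suc show ?case by (auto simp: walk_of_len_Suc_iff)
qed

lemma walk_of_len_rev:
  assumes sym: "\<And>u v. E u v \<Longrightarrow> E v u"
  shows "walk_of_len E u v n \<Longrightarrow> walk_of_len E v u n"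
proof (induction n arbitrary: v)
  case 0
  then show ?case by (simp add: walk_of_len_0_iff)
next
  case (Suc n)
  then obtain x where x: "walk_of_len E u x n" "E x v" by (auto simp: walk_of_len_Suc_iff)
  have "walk_of_len E v x 1" using sym[OF x(2)] by (simp only: walk_of_len_1_iff)
  from walk_of_len_append[OF this Suc.IH[OF x(1)]] show ?case by simp
qed

lemma gdist_le: "walk_of_len E u v n \<Longrightarrow> gdist E u v \<le> n"
  unfolding gdist_def by (rule Least_le)

lemma gdist_edge_le: "E u v \<Longrightarrow> gdist E u v \<le> 1"
  by (rule gdist_le, rule walk_of_len_1_iff[THEN iffD2])

text \<open>Junk (\<open>LEAST\<close> of an unsatisfiable predicate) if no vertex of \<open>S\<close> reaches \<open>v\<close>, e.g. if \<open>S = {}\<close>.\<close>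

definition set_dist :: "('a \<Rightarrow> 'a \<Rightarrow> bool) \<Rightarrow> 'a set \<Rightarrow> 'a \<Rightarrow> nat" where
  "set_dist E S v = (LEAST n. \<exists>s\<in>S. walk_of_len E s v n)"

lemma set_dist_le: "s \<in> S \<Longrightarrow> walk_of_len E s v n \<Longrightarrow> set_dist E S v \<le> n"
  unfolding set_dist_def by (rule Least_le) blast

lemma card_band_eq_sum_levels:
  fixes f :: "'a \<Rightarrow> nat"
  assumes "finite V"
  shows "card {v \<in> V. a \<le> f v \<and> f v \<le> b} = (\<Sum>j = a..b. card {v \<in> V. f v = j})"
proof -
  have "{v \<in> V. a \<le> f v \<and> f v \<le> b} = (\<Union>j\<in>{a..b}. {v \<in> V. f v = j})" by auto
  then show ?thesis using assms by (subst card_UN_disjoint[symmetric]) auto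
qed

lemma sum_atLeastAtMost_pred_Suc:
  fixes f :: "nat \<Rightarrow> 'b::comm_monoid_add"
  assumes "0 < i"
  shows "(\<Sum>j = i - 1..i + 1. f j) = f (i - 1) + f i + f (i + 1)"
proof -
  obtain m where "i = Suc m" using assms gr0_conv_Suc by blast
  then show ?thesis by (simp add: sum.atLeast_Suc_atMost add.assoc)
qed

locale connected_simple_graph =
  fixes V :: "'a set" and E :: "'a \<Rightarrow> 'a \<Rightarrow> bool"
  assumes simple: "simple_graph V E" and connected: "connected_graph V E"
begin

lemma finite_vertices: "finite V"
  using simple unfolding simple_graph_def by blast

lemma edge_sym: "E u v \<Longrightarrow> E v u"
  using simple unfolding simple_graph_def by blast

lemma edge_irrefl: "\<not> E u u"
  using simple unfolding simple_graph_def by blast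

lemma edge_vertices: "E u v \<Longrightarrow> u \<in> V" "E u v \<Longrightarrow> v \<in> V"
  using simple unfolding simple_graph_def by blast+

lemma min_degree_le_degree: "y \<in> V \<Longrightarrow> min_degree V E \<le> card {v \<in> V. E y v}"
  unfolding min_degree_def
  by (rule Min_le) (use finite_vertices in \<open>auto simp: setcompr_eq_image\<close>)

lemma gdist_walk:
  assumes "u \<in> V" "v \<in> V"
  shows "walk_of_len E u v (gdist E u v)"
proof -
  obtain n where "walk_of_len E u v n"
    using connected assms unfolding connected_graph_def by blast
  then show ?thesis unfolding gdist_def by (rule LeastI)
qed

lemma gdist_commute:
  assumes "u \<in> V" "v \<in> V"
  shows "gdist E u v = gdist E v u"
proof -
  have "gdist E y x \<le> gdist E x y" if "x \<in> V" "y \<in> V" for x y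
    by (rule gdist_le, rule walk_of_len_rev[OF edge_sym gdist_walk[OF that]])
  with assms show ?thesis by (simp add: antisym)
qed

lemma gdist_triangle:
  assumes "u \<in> V" "v \<in> V" "w \<in> V"
  shows "gdist E u w \<le> gdist E u v + gdist E v w"
  using walk_of_len_append[OF gdist_walk[OF assms(1,2)] gdist_walk[OF assms(2,3)]]
  by (rule gdist_le)

lemma gdist_edge_Suc_le: "s \<in> V \<Longrightarrow> E w v \<Longrightarrow> gdist E s v \<le> Suc (gdist E s w)"
  using gdist_triangle[of s w v] gdist_edge_le[of E w v] edge_vertices[of w v] by simp

lemma gdist_Suc_predecessor:
  assumes "s \<in> V" "v \<in> V" "gdist E s v = Suc n"
  obtains w where "w \<in> V" "E w v" "gdist E s w = n"
proof -
  obtain w where w: "walk_of_len E s w n" "E w v"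
    using gdist_walk[OF assms(1,2)] assms(3) by (auto simp: walk_of_len_Suc_iff)
  have "gdist E s w = n"
    using gdist_le[OF w(1)] gdist_edge_Suc_le[OF assms(1) w(2)] assms(3) by linarith
  with w(2) edge_vertices(1)[OF w(2)] that show thesis by blast
qed

lemma gdist_intermediate_value:
  assumes "s \<in> V" "v \<in> V" "m \<le> gdist E s v"
  shows "\<exists>y\<in>V. gdist E s y = m"
  using assms(2,3)
proof (induction "gdist E s v" arbitrary: v)
  case 0
  then show ?case by auto
next
  case (Suc n)
  show ?case
  proof (cases "m = Suc n")
    case True
    with Suc.hyps Suc.prems(1) show ?thesis by auto
  next
    case False
    obtain w where "w \<in> V" "gdist E s w = n"
      using gdist_Suc_predecessor[OF assms(1) Suc.prems(1) Suc.hyps(2)[symmetric]] by blast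
    with False Suc show ?thesis by auto
  qed
qed

lemma diam_attained:
  assumes "V \<noteq> {}"
  obtains u w where "u \<in> V" "w \<in> V" "gdist E u w = diam V E"
proof -
  let ?D = "{gdist E u v | u v. u \<in> V \<and> v \<in> V}"
  have "?D = (\<lambda>(u, v). gdist E u v) ` (V \<times> V)" by auto
  then have "finite ?D" using finite_vertices by simp
  moreover obtain v where "v \<in> V" using assms by blast
  then have "?D \<noteq> {}" by blast
  ultimately have "Max ?D \<in> ?D" by (rule Max_in)
  then obtain u w where "u \<in> V" "w \<in> V" "Max ?D = gdist E u w" by blast
  then show thesis using that[of u w] unfolding diam_def by simp
qed

lemma eccentricity_gt:
  assumes "s \<in> V" "2 * r < diam V E"
  shows "\<exists>v\<in>V. r < gdist E s v"
proof -
  obtain u w where uw: "u \<in> V" "w \<in> V" "gdist E u w = diam V E"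
    using diam_attained[of thesis] assms(1) by blast
  have "gdist E u w \<le> gdist E s u + gdist E s w"
    using gdist_triangle[OF uw(1) assms(1) uw(2)] gdist_commute[OF uw(1) assms(1)] by simp
  with uw(3) assms(2) have "r < gdist E s u \<or> r < gdist E s w" by linarith
  with uw(1,2) show ?thesis by blast
qed

lemma set_dist_walk:
  assumes "S \<subseteq> V" "S \<noteq> {}" "v \<in> V"
  obtains s where "s \<in> S" "walk_of_len E s v (set_dist E S v)"
proof -
  obtain s0 where "s0 \<in> S" using assms(2) by blast
  with assms connected obtain n where "walk_of_len E s0 v n"
    unfolding connected_graph_def by blast
  with \<open>s0 \<in> S\<close> have "\<exists>n. \<exists>s\<in>S. walk_of_len E s v n" by blast
  then have "\<exists>s\<in>S. walk_of_len E s v (set_dist E S v)"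
    unfolding set_dist_def by (rule LeastI_ex)
  with that show thesis by blast
qed

lemma set_dist_edge_Suc_le:
  assumes "S \<subseteq> V" "S \<noteq> {}" "E w v"
  shows "set_dist E S v \<le> Suc (set_dist E S w)"
proof -
  obtain s where s: "s \<in> S" "walk_of_len E s w (set_dist E S w)"
    using set_dist_walk[OF assms(1,2) edge_vertices(1)[OF assms(3)]] by blast
  with assms(3) have "walk_of_len E s v (Suc (set_dist E S w))"
    by (auto simp: walk_of_len_Suc_iff)
  then show ?thesis by (rule set_dist_le[OF s(1)])
qed

lemma set_dist_eq_0_iff:
  assumes "S \<subseteq> V" "S \<noteq> {}" "v \<in> V"
  shows "set_dist E S v = 0 \<longleftrightarrow> v \<in> S"
proof
  assume "set_dist E S v = 0"
  then show "v \<in> S"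
    using set_dist_walk[OF assms] by (metis walk_of_len_0_iff)
next
  assume "v \<in> S"
  then show "set_dist E S v = 0"
    using set_dist_le[of v S E v 0] by (simp add: walk_of_len_0_iff)
qed

lemma nbhd_eq_set_dist_1:
  assumes "S \<subseteq> V" "S \<noteq> {}" and no_edge: "\<And>u v. u \<in> S \<Longrightarrow> v \<in> S \<Longrightarrow> \<not> E u v"
  shows "nbhd V E S = {v \<in> V. set_dist E S v = 1}"
proof (intro set_eqI iffI)
  fix v assume "v \<in> nbhd V E S"
  then obtain u where u: "u \<in> S" "E u v" "v \<in> V" unfolding nbhd_def by blast
  have "set_dist E S v \<le> 1"
    by (rule set_dist_le[OF u(1) walk_of_len_1_iff[of E u v, THEN iffD2, OF u(2)]])
  moreover have "v \<notin> S" using no_edge u by blast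
  ultimately show "v \<in> {v \<in> V. set_dist E S v = 1}"
    using set_dist_eq_0_iff[OF assms(1,2) u(3)] u(3) by simp
next
  fix v assume v: "v \<in> {v \<in> V. set_dist E S v = 1}"
  then obtain s where "s \<in> S" "walk_of_len E s v 1"
    using set_dist_walk[OF assms(1,2), of v] by auto
  with v show "v \<in> nbhd V E S" unfolding nbhd_def walk_of_len_1_iff by auto
qed

lemma nbhd_set_dist_level:
  assumes "S \<subseteq> V" "S \<noteq> {}"
  shows "nbhd V E {v \<in> V. set_dist E S v = Suc j}
           - ({v \<in> V. set_dist E S v = j} \<union> {v \<in> V. set_dist E S v = Suc j})
         = {v \<in> V. set_dist E S v = Suc (Suc j)}"
proof (intro set_eqI iffI)
  fix v
  assume v: "v \<in> nbhd V E {v \<in> V. set_dist E S v = Suc j}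
                  - ({v \<in> V. set_dist E S v = j} \<union> {v \<in> V. set_dist E S v = Suc j})"
  then obtain w where w: "set_dist E S w = Suc j" "E w v" "v \<in> V"
    unfolding nbhd_def by blast
  have "set_dist E S v \<le> Suc (Suc j)"
    using set_dist_edge_Suc_le[OF assms w(2)] w(1) by simp
  moreover have "Suc j \<le> Suc (set_dist E S v)"
    using set_dist_edge_Suc_le[OF assms edge_sym[OF w(2)]] w(1) by simp
  ultimately show "v \<in> {v \<in> V. set_dist E S v = Suc (Suc j)}"
    using v w(3) by auto
next
  fix v assume v: "v \<in> {v \<in> V. set_dist E S v = Suc (Suc j)}"
  then obtain s where "s \<in> S" "walk_of_len E s v (Suc (Suc j))"
    using set_dist_walk[OF assms, of v] by auto
  then obtain w where w: "s \<in> S" "walk_of_len E s w (Suc j)" "E w v"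
    by (auto simp: walk_of_len_Suc_iff)
  have "set_dist E S w = Suc j"
    using set_dist_le[OF w(1,2)] set_dist_edge_Suc_le[OF assms w(3)] v by simp
  with v w(3) edge_vertices[OF w(3)]
  show "v \<in> nbhd V E {v \<in> V. set_dist E S v = Suc j}
              - ({v \<in> V. set_dist E S v = j} \<union> {v \<in> V. set_dist E S v = Suc j})"
    unfolding nbhd_def by auto
qed

lemma nbhd_pow_eq_set_dist_level:
  assumes "S \<subseteq> V" "S \<noteq> {}" and "\<And>u v. u \<in> S \<Longrightarrow> v \<in> S \<Longrightarrow> \<not> E u v"
  shows "nbhd_pow V E j S = {v \<in> V. set_dist E S v = j}"
proof (induction j rule: induct_nat_012)
  case 0
  show ?case using set_dist_eq_0_iff[OF assms(1,2)] assms(1) by auto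
next
  case 1
  show ?case using nbhd_eq_set_dist_1[OF assms] by simp
next
  case (ge2 j)
  then show ?case using nbhd_set_dist_level[OF assms(1,2)] by simp
qed

lemma k_independent_no_edge:
  assumes "k_independent V E k S" "0 < k" "u \<in> S" "v \<in> S"
  shows "\<not> E u v"
  using assms gdist_edge_le[of E u v] edge_irrefl
  unfolding k_independent_def by force

lemma k_independent_set_dist_eq_gdist:
  assumes indep: "k_independent V E k S" and "s \<in> S" "v \<in> V" "2 * gdist E s v \<le> k"
  shows "set_dist E S v = gdist E s v"
proof -
  have S: "S \<subseteq> V" "S \<noteq> {}" using indep assms(2) unfolding k_independent_def by auto
  have s: "s \<in> V" using S assms(2) by blast
  have le: "set_dist E S v \<le> gdist E s v"
    by (rule set_dist_le[OF assms(2) gdist_walk[OF s assms(3)]])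
  obtain s' where s': "s' \<in> S" "walk_of_len E s' v (set_dist E S v)"
    using set_dist_walk[OF S assms(3)] by blast
  have "gdist E s s' \<le> gdist E s v + set_dist E S v"
    using walk_of_len_append[OF gdist_walk[OF s assms(3)] walk_of_len_rev[OF edge_sym s'(2)]]
    by (rule gdist_le)
  with le assms(4) have "gdist E s s' \<le> k" by linarith
  with indep assms(2) s'(1) have "s' = s" unfolding k_independent_def by force
  with s'(2) have "gdist E s v \<le> set_dist E S v" by (blast intro: gdist_le)
  with le show ?thesis by (rule antisym)
qed

definition annulus :: "'a \<Rightarrow> nat \<Rightarrow> nat \<Rightarrow> 'a set" where
  "annulus s a b = {v \<in> V. a \<le> gdist E s v \<and> gdist E s v \<le> b}"

lemma finite_annulus: "finite (annulus s a b)"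
  unfolding annulus_def using finite_vertices by simp

lemma card_annulus_ge:
  assumes "s \<in> V" "v \<in> V" "b \<le> gdist E s v"
  shows "Suc b - a \<le> card (annulus s a b)"
proof -
  have "{a..b} \<subseteq> gdist E s ` annulus s a b"
  proof
    fix m assume "m \<in> {a..b}"
    with assms gdist_intermediate_value[of s v m] obtain y where "y \<in> V" "gdist E s y = m"
      by auto
    with \<open>m \<in> {a..b}\<close> show "m \<in> gdist E s ` annulus s a b" unfolding annulus_def by force
  qed
  then have "card {a..b} \<le> card (gdist E s ` annulus s a b)"
    by (intro card_mono finite_imageI finite_annulus)
  also have "\<dots> \<le> card (annulus s a b)" by (rule card_image_le[OF finite_annulus])
  finally show ?thesis by simp
qed

lemma min_degree_lt_card_annulus:
  assumes "s \<in> V" "y \<in> V" "a < gdist E s y" "gdist E s y < b"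
  shows "min_degree V E < card (annulus s a b)"
proof -
  have "insert y {v \<in> V. E y v} \<subseteq> annulus s a b"
    using assms gdist_edge_Suc_le[OF assms(1)] edge_sym
    unfolding annulus_def by fastforce
  then have "card (insert y {v \<in> V. E y v}) \<le> card (annulus s a b)"
    by (rule card_mono[OF finite_annulus])
  moreover have "card (insert y {v \<in> V. E y v}) = Suc (card {v \<in> V. E y v})"
    using finite_vertices edge_irrefl by simp
  ultimately show ?thesis using min_degree_le_degree[OF assms(2)] by simp
qed

lemma sum_card_annuli_le_levels:
  assumes indep: "k_independent V E k S" and "2 * b \<le> k"
  shows "(\<Sum>s\<in>S. card (annulus s a b)) \<le> (\<Sum>j = a..b. card {v \<in> V. set_dist E S v = j})"
proof -
  have S: "S \<subseteq> V" "finite S"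
    using indep finite_vertices unfolding k_independent_def by (auto intro: finite_subset)
  have disjoint: "annulus s a b \<inter> annulus s' a b = {}" if "s \<in> S" "s' \<in> S" "s \<noteq> s'" for s s'
  proof -
    have "gdist E s s' \<le> 2 * b" if "v \<in> V" "gdist E s v \<le> b" "gdist E s' v \<le> b" for v
    proof -
      have "s \<in> V" "s' \<in> V" using S(1) \<open>s \<in> S\<close> \<open>s' \<in> S\<close> by auto
      then have "gdist E s s' \<le> gdist E s v + gdist E s' v"
        using gdist_triangle[of s v s'] gdist_commute[of s' v] that(1) by simp
      with that(2,3) show ?thesis by linarith
    qed
    with indep that assms(2) show ?thesis
      unfolding annulus_def k_independent_def by fastforce
  qed
  have band: "annulus s a b \<subseteq> {v \<in> V. a \<le> set_dist E S v \<and> set_dist E S v \<le> b}"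
    if "s \<in> S" for s
    using k_independent_set_dist_eq_gdist[OF indep that] assms(2)
    unfolding annulus_def by auto
  have "(\<Sum>s\<in>S. card (annulus s a b)) = card (\<Union>s\<in>S. annulus s a b)"
    using disjoint by (simp add: card_UN_disjoint S(2) finite_annulus)
  also have "\<dots> \<le> card {v \<in> V. a \<le> set_dist E S v \<and> set_dist E S v \<le> b}"
    using band by (intro card_mono) (auto simp: finite_vertices)
  also have "\<dots> = (\<Sum>j = a..b. card {v \<in> V. set_dist E S v = j})"
    by (rule card_band_eq_sum_levels[OF finite_vertices])
  finally show ?thesis .
qed

lemma card_annulus_pred_Suc_ge:
  assumes "s \<in> V" "0 < i" "2 * i < diam V E"
  shows "3 \<le> card (annulus s (i - 1) (i + 1))"
    and "min_degree V E + 1 \<le> card (annulus s (i - 1) (i + 1))"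
proof -
  obtain v where v: "v \<in> V" "i < gdist E s v"
    using eccentricity_gt[OF assms(1,3)] by blast
  show "3 \<le> card (annulus s (i - 1) (i + 1))"
    using card_annulus_ge[OF assms(1) v(1), of "i + 1" "i - 1"] v(2) assms(2) by simp
  obtain y where "y \<in> V" "gdist E s y = i"
    using gdist_intermediate_value[OF assms(1) v(1), of i] v(2) by auto
  then show "min_degree V E + 1 \<le> card (annulus s (i - 1) (i + 1))"
    using min_degree_lt_card_annulus[OF assms(1), of y "i - 1" "i + 1"] assms(2) by simp
qed

lemma sum_card_annuli_le_nbhd_pow:
  assumes indep: "k_independent V E k S" and "0 < k" "0 < i" "2 * (i + 1) \<le> k"
  shows "(\<Sum>s\<in>S. card (annulus s (i - 1) (i + 1)))
    \<le> card (nbhd_pow V E (i - 1) S) + card (nbhd_pow V E i S) + card (nbhd_pow V E (i + 1) S)"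
proof (cases "S = {}")
  case True
  then show ?thesis by simp
next
  case False
  have "S \<subseteq> V" using indep unfolding k_independent_def by blast
  then have "(\<Sum>s\<in>S. card (annulus s (i - 1) (i + 1)))
      \<le> (\<Sum>j = i - 1..i + 1. card (nbhd_pow V E j S))"
    using sum_card_annuli_le_levels[OF indep assms(4), of "i - 1"]
      nbhd_pow_eq_set_dist_level[OF _ False k_independent_no_edge[OF indep assms(2)]]
    by simp
  also have "\<dots>
      = card (nbhd_pow V E (i - 1) S) + card (nbhd_pow V E i S) + card (nbhd_pow V E (i + 1) S)"
    using assms(3) by (rule sum_atLeastAtMost_pred_Suc)
  finally show ?thesis .
qed

end

theorem lemma1:
  fixes V :: "'a set" and E :: "'a \<Rightarrow> 'a \<Rightarrow> bool" and S :: "'a set"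
    and k n \<delta> i :: nat
  assumes "simple_graph V E"
    and "card V = n"
    and "connected_graph V E"
    and "0 < k"
    and "diam V E \<ge> k + 1"
    and "\<delta> = min_degree V E"
    and "k_independent V E k S"
    and "3 \<le> i" and "2 * (i + 1) \<le> k"
  shows "card (nbhd_pow V E (i - 1) S) + card (nbhd_pow V E i S) + card (nbhd_pow V E (i + 1) S)
           \<ge> 3 * card S
       \<and> (\<delta> \<ge> 2 \<longrightarrow>
         card (nbhd_pow V E (i - 1) S) + card (nbhd_pow V E i S) + card (nbhd_pow V E (i + 1) S)
           \<ge> (\<delta> + 1) * card S)"
proof -
  interpret connected_simple_graph V E using assms(1,3) by unfold_locales
  have annulus_ge: "3 \<le> card (annulus s (i - 1) (i + 1))" "\<delta> + 1 \<le> card (annulus s (i - 1) (i + 1))"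
    if "s \<in> S" for s
    using card_annulus_pred_Suc_ge[of s i] that assms(5-9)
    unfolding k_independent_def by auto
  have bound: "c * card S
      \<le> card (nbhd_pow V E (i - 1) S) + card (nbhd_pow V E i S) + card (nbhd_pow V E (i + 1) S)"
    if "\<And>s. s \<in> S \<Longrightarrow> c \<le> card (annulus s (i - 1) (i + 1))" for c
  proof -
    have "c * card S \<le> (\<Sum>s\<in>S. card (annulus s (i - 1) (i + 1)))"
      using sum_bounded_below[where A = S and K = c and f = "\<lambda>s. card (annulus s (i - 1) (i + 1))"]
        that by (simp add: mult.commute)
    also have "\<dots>
      \<le> card (nbhd_pow V E (i - 1) S) + card (nbhd_pow V E i S) + card (nbhd_pow V E (i + 1) S)"
      using sum_card_annuli_le_nbhd_pow[OF assms(7,4) _ assms(9)] assms(8) by simp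
    finally show ?thesis .
  qed
  show ?thesis using bound[OF annulus_ge(1)] bound[OF annulus_ge(2)] by blast
qed

end
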